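(* Let $m\in[0..\frac n2-1]$. Let $x$ be a random bit string in $\{0,1\}^n$ such that $x_i=1$ for all $i\in[1..2m+2]$ and the bits $x_i$, $i\in[2m+3..n]$, are independent and uniformly distributed in $\{0,1\}$. Then for any $\delta\in[0,2]$, $E[\mathrm{HLB}_\delta(x)]\le 2m+4$.
   Context: Let $n$ be an even positive integer. For $x\in\{0,1\}^n$ consider the blocks $(x_{2\ell+1},x_{2\ell+2})$, $\ell=0,\dots,\frac n2-1$. If $x\neq(1,\dots,1)$, let $m$ be the smallest $\ell$ with $x_{2\ell+1}\neq 1$ or $x_{2\ell+2}\neq 1$, and define $\mathrm{DLB}(x)=2m+1$ if $x_{2m+1}+x_{2m+2}=0$ and $\mathrm{DLB}(x)=2m$ if $x_{2m+1}+x_{2m+2}=1$; set $\mathrm{DLB}(1,\dots,1)=n$. For a real parameter $\delta$, $\mathrm{HLB}_\delta(x)=2m$ if $\mathrm{DLB}(x)=2m+1$, $\mathrm{HLB}_\delta(x)=2m+2-\delta$ if $\mathrm{DLB}(x)=2m$ (for $m\in\{0,\dots,\frac n2-1\}$), and $\mathrm{HLB}_\delta(x)=n$ if $\mathrm{DLB}(x)=n$. *)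

theory Defs
  imports "HOL-Probability.Probability"
begin

(* Bit strings in {0,1}^n are lists of naturals of length n with entries in {0,1};
   the paper's 1-based bit x_i is  xbit x i = x ! (i - 1). *)
definition bitstrings :: "nat \<Rightarrow> nat list set" where
  "bitstrings n = {x. length x = n \<and> set x \<subseteq> {0, 1}}"

definition xbit :: "nat list \<Rightarrow> nat \<Rightarrow> nat" where
  "xbit x i = x ! (i - 1)"

definition DLB :: "nat \<Rightarrow> nat list \<Rightarrow> nat" where
  "DLB n x =
     (if (\<forall>i\<in>{1..n}. xbit x i = 1) then n
      else (let m = (LEAST l. l < n div 2 \<and>
                       (xbit x (2*l+1) \<noteq> 1 \<or> xbit x (2*l+2) \<noteq> 1))
            in if xbit x (2*m+1) + xbit x (2*m+2) = 0 then 2*m+1 else 2*m))"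

definition HLB :: "nat \<Rightarrow> real \<Rightarrow> nat list \<Rightarrow> real" where
  "HLB n \<delta> x =
     (if DLB n x = n then real n
      else if odd (DLB n x) then real (DLB n x) - 1
      else real (DLB n x) + 2 - \<delta>)"

end

theory Submission
  imports Defs
begin

(* Since the string starts with m + 1 blocks 11, HLB equals 2(m + 1) plus the HLB-like value
   block_HLB of the remaining 2j uniform bits, read block by block: 2 per leading block 11, then
   0 for a block 00 and 2 - \<delta> for 01 or 10. Splitting on the first block, the total T j of
   block_HLB over all 4^j strings satisfies T (j + 1) = 2 (2 - \<delta>) 4^j + 2 * 4^j + T j, so
   T j \<le> 2 * 4^j for \<delta> \<ge> 0: the remaining bits contribute at most 2 in expectation. *)

lemma xbit_replicate_append:
  assumes "1 \<le> i"
  shows "xbit (replicate k c @ y) i = (if i \<le> k then c else xbit y (i - k))"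
  using assms by (auto simp: xbit_def nth_append)

lemma bitstrings_Suc:
  "bitstrings (Suc k) = (\<lambda>y. 0 # y) ` bitstrings k \<union> (\<lambda>y. 1 # y) ` bitstrings k"
  unfolding bitstrings_def by (auto simp: length_Suc_conv)

lemma finite_bitstrings: "finite (bitstrings k)"
  using finite_lists_length_eq[of "{0, 1 :: nat}" k]
  by (simp add: bitstrings_def conj_commute)

lemma card_bitstrings: "card (bitstrings k) = 2 ^ k"
  using card_lists_length_eq[of "{0, 1 :: nat}" k]
  by (simp add: bitstrings_def conj_commute numeral_2_eq_2)

lemma sum_bitstrings_Suc:
  "(\<Sum>x\<in>bitstrings (Suc k). f x) = (\<Sum>y\<in>bitstrings k. f (0 # y)) + (\<Sum>y\<in>bitstrings k. f (1 # y))"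
  unfolding bitstrings_Suc
  by (subst sum.union_disjoint) (auto simp: finite_bitstrings sum.reindex)

lemma prefix_ones_bitstrings_eq_image:
  "{x \<in> bitstrings (k + l). \<forall>i\<in>{1..k}. xbit x i = 1}
     = (\<lambda>y. replicate k 1 @ y) ` bitstrings l"
proof (intro equalityI subsetI)
  fix x assume x: "x \<in> {x \<in> bitstrings (k + l). \<forall>i\<in>{1..k}. xbit x i = 1}"
  have "xbit x (Suc i) = 1" if "i < k" for i
    using x that by auto
  then have "take k x = replicate k 1"
    using x by (auto simp: bitstrings_def xbit_def intro!: nth_equalityI)
  then have "x = replicate k 1 @ drop k x"
    by (metis append_take_drop_id)
  moreover have "drop k x \<in> bitstrings l"
    using x by (auto simp: bitstrings_def dest: in_set_dropD)
  ultimately show "x \<in> (\<lambda>y. replicate k 1 @ y) ` bitstrings l" by blast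
qed (auto simp: bitstrings_def xbit_replicate_append)

fun block_HLB :: "real \<Rightarrow> nat list \<Rightarrow> real" where
  "block_HLB \<delta> (a # b # x) =
     (if a = 1 \<and> b = 1 then 2 + block_HLB \<delta> x else if a + b = 0 then 0 else 2 - \<delta>)"
| "block_HLB \<delta> _ = 0"

lemma block_HLB_replicate_ones_append:
  "block_HLB \<delta> (replicate (2 * l) 1 @ x) = 2 * real l + block_HLB \<delta> x"
  by (induction l) (simp_all add: numeral_2_eq_2)

lemma sum_block_HLB_le:
  assumes "0 \<le> \<delta>"
  shows "(\<Sum>x\<in>bitstrings (2 * j). block_HLB \<delta> x) \<le> 2 * 4 ^ j"
proof (induction j)
  case 0
  have "bitstrings 0 = {[]}" by (auto simp: bitstrings_def)
  then show ?case by simp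
next
  case (Suc j)
  let ?B = "bitstrings (2 * j)"
  have card: "real (card ?B) = 4 ^ j"
    by (simp add: card_bitstrings power_mult)
  have "(\<Sum>x\<in>bitstrings (2 * Suc j). block_HLB \<delta> x)
      = 2 * (2 - \<delta>) * 4 ^ j + 2 * 4 ^ j + (\<Sum>x\<in>?B. block_HLB \<delta> x)"
    by (simp add: sum_bitstrings_Suc sum.distrib card)
  also have "\<dots> \<le> 4 * 4 ^ j + 2 * 4 ^ j + 2 * 4 ^ j"
    using Suc assms by (intro add_mono mult_right_mono) auto
  finally show ?case by simp
qed

lemma expectation_block_HLB_le:
  assumes "0 \<le> \<delta>"
  shows "measure_pmf.expectation (pmf_of_set (bitstrings (2 * j))) (block_HLB \<delta>) \<le> 2"
proof -
  have "bitstrings (2 * j) \<noteq> {}"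
    using card_bitstrings[of "2 * j"] by auto
  then show ?thesis
    using sum_block_HLB_le[OF assms, of j]
    by (simp add: integral_pmf_of_set finite_bitstrings card_bitstrings power_mult divide_le_eq)
qed

lemma ones_or_first_defective_block:
  fixes x :: "nat list"
  assumes "even (length x)"
  shows "x = replicate (length x) 1
    \<or> (\<exists>l a b y. x = replicate (2 * l) 1 @ a # b # y \<and> \<not> (a = 1 \<and> b = 1))"
  using assms
proof (induction x rule: induct_list012)
  case (3 a b y)
  show ?case
  proof (cases "a = 1 \<and> b = 1")
    case True
    from "3.IH"(1) "3.prems" have "y = replicate (length y) 1
        \<or> (\<exists>l a b z. y = replicate (2 * l) 1 @ a # b # z \<and> \<not> (a = 1 \<and> b = 1))"
      by simp
    then show ?thesis
    proof (elim disjE exE conjE)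
      fix l c d z assume "y = replicate (2 * l) 1 @ c # d # z" "\<not> (c = 1 \<and> d = 1)"
      with True have "a # b # y = replicate (2 * Suc l) 1 @ c # d # z"
        by (simp add: numeral_2_eq_2)
      with \<open>\<not> (c = 1 \<and> d = 1)\<close> show ?thesis by blast
    qed (use True in \<open>metis replicate_Suc length_Cons\<close>)
  next
    case False
    then have "a # b # y = replicate (2 * 0) 1 @ a # b # y \<and> \<not> (a = 1 \<and> b = 1)"
      by simp
    then show ?thesis by blast
  qed
qed auto

lemma DLB_replicate_ones: "DLB n (replicate n 1) = n"
proof -
  have "\<forall>i\<in>{1..n}. xbit (replicate n 1) i = 1"
    by (auto simp: xbit_def)
  then show ?thesis
    by (simp add: DLB_def)
qed

lemma DLB_first_defective_block:
  assumes x: "x = replicate (2 * l) 1 @ a # b # y" and ab: "\<not> (a = 1 \<and> b = 1)"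
    and n: "length x = n"
  shows "DLB n x = (if a + b = 0 then 2 * l + 1 else 2 * l)"
proof -
  have block: "xbit x (2 * l + 1) = a" "xbit x (2 * l + 2) = b"
    using x by (simp_all add: xbit_def nth_append)
  have "2 * l + 2 \<le> n"
    using x n by simp
  have least: "(LEAST l'. l' < n div 2 \<and> (xbit x (2 * l' + 1) \<noteq> 1 \<or> xbit x (2 * l' + 2) \<noteq> 1)) = l"
  proof (rule Least_equality)
    show "l < n div 2 \<and> (xbit x (2 * l + 1) \<noteq> 1 \<or> xbit x (2 * l + 2) \<noteq> 1)"
      using block ab \<open>2 * l + 2 \<le> n\<close> by auto
  next
    fix l' assume defective: "l' < n div 2 \<and> (xbit x (2 * l' + 1) \<noteq> 1 \<or> xbit x (2 * l' + 2) \<noteq> 1)"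
    show "l \<le> l'"
    proof (rule ccontr)
      assume "\<not> l \<le> l'"
      then have "xbit x (2 * l' + 1) = 1 \<and> xbit x (2 * l' + 2) = 1"
        using x by (simp add: xbit_replicate_append)
      with defective show False by simp
    qed
  qed
  have not_all_ones: "\<not> (\<forall>i\<in>{1..n}. xbit x i = 1)"
    using block ab \<open>2 * l + 2 \<le> n\<close> by force
  show ?thesis
    by (simp only: DLB_def if_not_P[OF not_all_ones] Let_def least block)
qed

lemma HLB_eq_block_HLB:
  assumes "even (length x)"
  shows "HLB (length x) \<delta> x = block_HLB \<delta> x"
  using ones_or_first_defective_block[OF assms]
proof (elim disjE exE conjE)
  assume x: "x = replicate (length x) 1"
  obtain q where q: "length x = 2 * q"
    using assms by blast
  have "block_HLB \<delta> x = real (length x)"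
    using block_HLB_replicate_ones_append[of \<delta> q "[]"] x q by simp
  then show ?thesis
    using DLB_replicate_ones[of "length x"] x by (simp add: HLB_def)
next
  fix l a b y
  assume x: "x = replicate (2 * l) 1 @ a # b # y" and ab: "\<not> (a = 1 \<and> b = 1)"
  have "DLB (length x) x = (if a + b = 0 then 2 * l + 1 else 2 * l)"
    using x ab by (rule DLB_first_defective_block) simp
  moreover have "2 * l + 2 \<le> length x"
    using x by simp
  moreover have "block_HLB \<delta> x = 2 * real l + (if a + b = 0 then 0 else 2 - \<delta>)"
    unfolding x block_HLB_replicate_ones_append using ab by auto
  ultimately show ?thesis
    by (auto simp: HLB_def)
qed

lemma HLB_replicate_ones_append:
  assumes "length y = 2 * j"
  shows "HLB (2 * k + 2 * j) \<delta> (replicate (2 * k) 1 @ y) = 2 * real k + block_HLB \<delta> y"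
  using HLB_eq_block_HLB[of "replicate (2 * k) 1 @ y" \<delta>] assms
  unfolding block_HLB_replicate_ones_append by simp

lemma expectation_HLB_replicate_ones_append:
  "measure_pmf.expectation (pmf_of_set ((\<lambda>y. replicate (2 * k) 1 @ y) ` bitstrings (2 * j)))
     (HLB (2 * k + 2 * j) \<delta>)
   = 2 * real k + measure_pmf.expectation (pmf_of_set (bitstrings (2 * j))) (block_HLB \<delta>)"
proof -
  let ?B = "bitstrings (2 * j)"
  let ?prefix = "\<lambda>y. replicate (2 * k) 1 @ y"
  have B: "finite ?B" "?B \<noteq> {}"
    using finite_bitstrings card_bitstrings[of "2 * j"] by auto
  have "pmf_of_set (?prefix ` ?B) = map_pmf ?prefix (pmf_of_set ?B)"
    by (intro map_pmf_of_set_inj[symmetric]) (auto simp: B inj_on_def)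
  then have "measure_pmf.expectation (pmf_of_set (?prefix ` ?B)) (HLB (2 * k + 2 * j) \<delta>)
      = measure_pmf.expectation (pmf_of_set ?B) (\<lambda>y. HLB (2 * k + 2 * j) \<delta> (?prefix y))"
    by simp
  also have "\<dots> = measure_pmf.expectation (pmf_of_set ?B) (\<lambda>y. 2 * real k + block_HLB \<delta> y)"
    using HLB_replicate_ones_append set_pmf_of_set[OF B(2,1)]
    by (auto intro!: integral_cong_AE simp: AE_measure_pmf_iff bitstrings_def)
  also have "\<dots> = 2 * real k + measure_pmf.expectation (pmf_of_set ?B) (block_HLB \<delta>)"
    by (simp add: B integrable_measure_pmf_finite)
  finally show ?thesis .
qed

theorem lemma6:
  fixes n m :: nat and \<delta> :: real
  assumes "even n" and "n > 0" and "m \<le> n div 2 - 1"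
    and "0 \<le> \<delta>" and "\<delta> \<le> 2"
  shows "measure_pmf.expectation
           (pmf_of_set {x \<in> bitstrings n. \<forall>i\<in>{1..2*m+2}. xbit x i = 1})
           (HLB n \<delta>) \<le> 2 * real m + 4"
proof -
  obtain j where n: "n = 2 * (m + 1) + 2 * j"
    using assms(1-3) by (intro that[of "(n - (2 * m + 2)) div 2"]) auto
  have "{x \<in> bitstrings n. \<forall>i\<in>{1..2*m+2}. xbit x i = 1}
      = (\<lambda>y. replicate (2 * (m + 1)) 1 @ y) ` bitstrings (2 * j)"
    using prefix_ones_bitstrings_eq_image[of "2 * (m + 1)" "2 * j"] n by simp
  then have "measure_pmf.expectation
      (pmf_of_set {x \<in> bitstrings n. \<forall>i\<in>{1..2*m+2}. xbit x i = 1}) (HLB n \<delta>)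
      = 2 * real (m + 1) + measure_pmf.expectation (pmf_of_set (bitstrings (2 * j))) (block_HLB \<delta>)"
    by (simp only: n expectation_HLB_replicate_ones_append)
  then show ?thesis
    using expectation_block_HLB_le[OF assms(4), of j] by simp
qed

end
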